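(* Let $p\in S_m$ avoid the pattern $321$. Then for every $n\ge 2$ there are only finitely many $\omega\in\widetilde{S}_n$ that avoid $p$.
   Context: For $n\ge 2$, the affine symmetric group $\widetilde{S}_n$ is the set of bijections $\omega:\mathbb{Z}\to\mathbb{Z}$ such that $\omega(i+n)=\omega(i)+n$ for all $i\in\mathbb{Z}$ and $\sum_{i=1}^n\omega(i)=\binom{n+1}{2}$; write $\omega_i=\omega(i)$. For $p\in S_k$, $\omega$ contains $p$ if there exist integers $i_1<\cdots<i_k$ such that $\omega_{i_1}\cdots\omega_{i_k}$ has the same relative order as $p_1\cdots p_k$; otherwise $\omega$ avoids $p$. Containment between ordinary permutations is defined the same way. *)

theory Defs
  imports "HOL-Combinatorics.Permutations"
begin

text \<open>A permutation p in S_k is represented as a function nat => nat with p permutes {1..k};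
  the word p_1 ... p_k is p 1, ..., p k.\<close>

definition contains_pattern :: "('a::linorder \<Rightarrow> 'b::linorder) \<Rightarrow> (nat \<Rightarrow> nat) \<Rightarrow> nat \<Rightarrow> bool" where
  "contains_pattern w p k \<longleftrightarrow>
     (\<exists>idx :: nat \<Rightarrow> 'a. strict_mono_on {1..k} idx \<and>
        (\<forall>a\<in>{1..k}. \<forall>b\<in>{1..k}. w (idx a) < w (idx b) \<longleftrightarrow> p a < p b))"

definition avoids_pattern :: "('a::linorder \<Rightarrow> 'b::linorder) \<Rightarrow> (nat \<Rightarrow> nat) \<Rightarrow> nat \<Rightarrow> bool" where
  "avoids_pattern w p k \<longleftrightarrow> \<not> contains_pattern w p k"

definition perm_contains :: "(nat \<Rightarrow> nat) \<Rightarrow> nat \<Rightarrow> (nat \<Rightarrow> nat) \<Rightarrow> nat \<Rightarrow> bool" where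
  "perm_contains q m p k \<longleftrightarrow>
     (\<exists>idx :: nat \<Rightarrow> nat. strict_mono_on {1..k} idx \<and> idx ` {1..k} \<subseteq> {1..m} \<and>
        (\<forall>a\<in>{1..k}. \<forall>b\<in>{1..k}. q (idx a) < q (idx b) \<longleftrightarrow> p a < p b))"

definition pat321 :: "nat \<Rightarrow> nat" where
  "pat321 i = (if i \<in> {1..3} then 4 - i else i)"

definition affine_sym :: "nat \<Rightarrow> (int \<Rightarrow> int) set" where
  "affine_sym n = {w. bij w \<and> (\<forall>i. w (i + int n) = w i + int n)
                    \<and> (\<Sum>i=1..int n. w i) = int ((n + 1) choose 2)}"

end

theory Submission
  imports Defs "HOL-Library.FuncSet"
begin

(* A 321-avoiding permutation p of {1..m} is the merge of two increasing
   subsequences: its left-to-right maxima and the remaining entries.  An affine permutation w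
   of period n with a large displacement |w t - t| has two residues i, j in {1..n} with
   w i - w j > 2^m * n, and then the two arithmetic progressions w (i + k n) = w i + k n and
   w (j + k n) = w j + k n form two increasing sequences offset by roughly Q = (w i - w j) / n
   periods.  Placing the left-to-right maxima of p on the first progression and the other
   entries on the second, at period indices given by a suitable strictly increasing "schedule",
   yields an occurrence of p in w.  Hence every p-avoiding w has all displacements bounded,
   and there are only finitely many such w because w is determined by its window w 1 .. w n. *)

section \<open>Left-to-right maxima of 321-avoiding permutations\<close>

definition lr_max :: "(nat \<Rightarrow> nat) \<Rightarrow> nat \<Rightarrow> bool" where
  "lr_max p t \<longleftrightarrow> (\<forall>s. 1 \<le> s \<and> s < t \<longrightarrow> p s < p t)"

lemma lr_max_greater: "lr_max p t \<Longrightarrow> 1 \<le> s \<Longrightarrow> s < t \<Longrightarrow> p s < p t"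
  by (simp add: lr_max_def)

text \<open>In a 321-avoiding permutation the entries that are not left-to-right maxima increase:
  an earlier larger entry together with two such decreasing entries would form a 321.\<close>
lemma non_lr_max_increasing:
  assumes p: "p permutes {1..m}" and avoid: "\<not> perm_contains p m pat321 3"
    and y: "1 \<le> y" "y < y'" "y' \<le> m" "\<not> lr_max p y"
  shows "p y < p y'"
proof (rule ccontr)
  assume "\<not> p y < p y'"
  moreover have "p y \<noteq> p y'"
    using permutes_inj[OF p] y(2) by (metis injD less_irrefl)
  ultimately have y'_below: "p y' < p y" by simp
  obtain s where s: "1 \<le> s" "s < y" "\<not> p s < p y"
    using y(4) unfolding lr_max_def by blast
  have "p s \<noteq> p y"
    using permutes_inj[OF p] s(2) by (metis injD less_irrefl)
  with s(3) have s_above: "p y < p s" by simp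
  define idx where "idx = (\<lambda>k::nat. if k = 1 then s else if k = 2 then y else y')"
  have three: "{1..3::nat} = {1, 2, 3}" by auto
  have "perm_contains p m pat321 3"
    unfolding perm_contains_def
    by (rule exI[of _ idx])
       (use s y s_above y'_below in \<open>auto simp: strict_mono_on_def three pat321_def idx_def\<close>)
  with avoid show False by simp
qed

section \<open>The schedule\<close>

definition smaller_lr_before :: "(nat \<Rightarrow> nat) \<Rightarrow> nat \<Rightarrow> nat set" where
  "smaller_lr_before p t = {x. 1 \<le> x \<and> x < t \<and> lr_max p x \<and> p x < p t}"

lemma smaller_lr_before_finite: "finite (smaller_lr_before p t)"
  by (rule finite_subset[of _ "{..<t}"]) (auto simp: smaller_lr_before_def)

lemma smaller_lr_before_Max:
  assumes "smaller_lr_before p t \<noteq> {}"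
  shows "Max (smaller_lr_before p t) \<in> smaller_lr_before p t"
    and "Max (smaller_lr_before p t) < t"
  using Max_in[OF smaller_lr_before_finite assms] by (auto simp: smaller_lr_before_def)

text \<open>The schedule assigns to every position t of p a period index sched p m Q t.  It
  increases strictly; at a left-to-right maximum it advances by 2^(m-t) (these steps shrink, so
  that all maxima after a given one stay close to it), and at any other position y it jumps to at
  least Q + 1 beyond the last left-to-right maximum that is smaller than p y.  With an offset of
  about Q periods between the two progressions this realises the relative order of the entries.\<close>
function sched :: "(nat \<Rightarrow> nat) \<Rightarrow> nat \<Rightarrow> int \<Rightarrow> nat \<Rightarrow> int" where
  "sched p m Q 0 = 0"
| "sched p m Q (Suc t) =
     (if lr_max p (Suc t) then sched p m Q t + 2 ^ (m - t)
      else max (sched p m Q t + 1)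
        (if smaller_lr_before p (Suc t) = {} then 0
         else sched p m Q (Max (smaller_lr_before p (Suc t))) + Q + 1))"
  by pat_completeness auto
termination
  by (relation "measure (\<lambda>(p, m, Q, t). t)")
     (auto, metis empty_iff smaller_lr_before_Max(2))

definition jump :: "(nat \<Rightarrow> nat) \<Rightarrow> nat \<Rightarrow> int \<Rightarrow> nat \<Rightarrow> int" where
  "jump p m Q t = (if smaller_lr_before p t = {} then 0
                   else sched p m Q (Max (smaller_lr_before p t)) + Q + 1)"

lemma sched_lr_max: "lr_max p (Suc t) \<Longrightarrow> sched p m Q (Suc t) = sched p m Q t + 2 ^ (m - t)"
  by simp

lemma sched_not_lr_max:
  "\<not> lr_max p (Suc t) \<Longrightarrow> sched p m Q (Suc t) = max (sched p m Q t + 1) (jump p m Q (Suc t))"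
  by (simp add: jump_def)

declare sched.simps(2) [simp del]

lemma sched_strict_mono: "strict_mono (sched p m Q)"
  unfolding strict_mono_Suc_iff
proof
  fix t
  show "sched p m Q t < sched p m Q (Suc t)"
    by (cases "lr_max p (Suc t)") (simp_all add: sched_lr_max sched_not_lr_max)
qed

lemma sched_less: "a < b \<Longrightarrow> sched p m Q a < sched p m Q b"
  using sched_strict_mono strict_monoD by blast

lemma sched_le: "a \<le> b \<Longrightarrow> sched p m Q a \<le> sched p m Q b"
  using sched_strict_mono strict_mono_less_eq by blast

lemma sched_nonneg: "0 \<le> sched p m Q a"
  using sched_le[of 0 a p m Q] by simp

text \<open>A position that is not a left-to-right maximum is scheduled at or after its jump target
  (position 0 is vacuously a left-to-right maximum, so such a position is a successor).\<close>
lemma jump_le_sched: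
  assumes "\<not> lr_max p y"
  shows "jump p m Q y \<le> sched p m Q y"
proof -
  obtain t where "y = Suc t"
    using assms by (cases y) (auto simp: lr_max_def)
  with assms show ?thesis by (simp add: sched_not_lr_max)
qed

lemma jump_mono:
  assumes "0 \<le> Q" "t \<le> y" "p t < p y"
  shows "jump p m Q t \<le> jump p m Q y"
proof -
  have sub: "smaller_lr_before p t \<subseteq> smaller_lr_before p y"
    using assms(2,3) by (auto simp: smaller_lr_before_def)
  show ?thesis
  proof (cases "smaller_lr_before p t = {}")
    case True
    then show ?thesis
      using assms(1) sched_nonneg[of p m Q] by (simp add: jump_def)
  next
    case False
    with sub have "Max (smaller_lr_before p t) \<le> Max (smaller_lr_before p y)"
      by (intro Max_mono smaller_lr_before_finite)
    with False sub show ?thesis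
      by (auto simp: jump_def intro: sched_le)
  qed
qed

lemma sched_gap_above:
  assumes "lr_max p x" "\<not> lr_max p y" "1 \<le> x" "x < y" "p x < p y"
  shows "sched p m Q x + Q + 1 \<le> sched p m Q y"
proof -
  have x: "x \<in> smaller_lr_before p y"
    using assms by (simp add: smaller_lr_before_def)
  then have "x \<le> Max (smaller_lr_before p y)"
    by (simp add: smaller_lr_before_finite)
  then have "sched p m Q x + Q + 1 \<le> jump p m Q y"
    using x by (auto simp: jump_def intro: sched_le)
  also have "\<dots> \<le> sched p m Q y"
    using assms(2) by (rule jump_le_sched)
  finally show ?thesis .
qed

lemma sched_growth_bound:
  assumes "x \<le> t" "t \<le> m" "sched p m Q x \<le> M"
    and jumps: "\<And>s. x < s \<Longrightarrow> s \<le> t \<Longrightarrow> \<not> lr_max p s \<Longrightarrow> jump p m Q s \<le> M"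
  shows "sched p m Q t \<le> M + 2 ^ (m + 1 - x) - 2 ^ (m + 1 - t)"
  using assms(1,2) jumps
proof (induction t rule: dec_induct)
  case base
  then show ?case using assms(3) by simp
next
  case (step t)
  have IH: "sched p m Q t \<le> M + 2 ^ (m + 1 - x) - 2 * 2 ^ (m - t)"
    using step by (simp add: Suc_diff_le)
  have small: "(2::int) ^ (m - t) \<le> 2 ^ (m + 1 - x)"
    using step.hyps(1) by (intro power_increasing) auto
  have "sched p m Q (Suc t) \<le> M + 2 ^ (m + 1 - x) - 2 ^ (m - t)"
  proof (cases "lr_max p (Suc t)")
    case True
    then show ?thesis using IH by (simp add: sched_lr_max)
  next
    case False
    have "jump p m Q (Suc t) \<le> M"
      using step False by simp
    then have "jump p m Q (Suc t) \<le> M + 2 ^ (m + 1 - x) - 2 ^ (m - t)"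
      using small by linarith
    moreover have "sched p m Q t + 1 \<le> M + 2 ^ (m + 1 - x) - 2 ^ (m - t)"
      using IH one_le_power[of "2::int" "m - t"] by linarith
    ultimately show ?thesis
      using False by (simp add: sched_not_lr_max)
  qed
  then show ?case by simp
qed

lemma sched_gap_below:
  assumes p: "p permutes {1..m}" and avoid: "\<not> perm_contains p m pat321 3"
    and xy: "lr_max p x" "\<not> lr_max p y" "1 \<le> x" "x < y" "y \<le> m" "p y < p x"
    and Q: "2 ^ m \<le> Q"
  shows "sched p m Q y \<le> sched p m Q x + Q"
proof -
  let ?s = "sched p m Q"
  define B where "B = ?s x + Q + 1 - 2 ^ (m + 1 - x)"
  have Q0: "0 \<le> Q" using Q zero_le_power[of "2::int" m] by linarith
  have step_x: "?s x = ?s (x - 1) + 2 ^ (m + 1 - x)"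
    using sched_lr_max[of p "x - 1" m Q] xy(1,3) by (simp add: Suc_diff_le)
  have "(2::int) ^ (m + 1 - x) \<le> 2 ^ m"
    using xy(3) by (intro power_increasing) auto
  then have s_x: "?s x \<le> B" using Q unfolding B_def by linarith
  text \<open>Every smaller maximum before y lies before x, so the jump at y is at most B.\<close>
  have jump_y: "jump p m Q y \<le> B"
  proof (cases "smaller_lr_before p y = {}")
    case True
    then show ?thesis using Q0 sched_nonneg[of p m Q "x - 1"] step_x
      by (simp add: jump_def B_def)
  next
    case False
    let ?z = "Max (smaller_lr_before p y)"
    have z: "1 \<le> ?z" "?z < y" "lr_max p ?z" "p ?z < p y"
      using smaller_lr_before_Max(1)[OF False] by (auto simp: smaller_lr_before_def)
    have "?z < x"
    proof (rule ccontr)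
      assume "\<not> ?z < x"
      then have "x \<le> ?z" by simp
      then have "p x \<le> p ?z"
        using z(3) xy(3) lr_max_greater[of p ?z x] by (cases "x = ?z") auto
      with z(4) xy(6) show False by simp
    qed
    then have "?s ?z \<le> ?s (x - 1)" by (intro sched_le) simp
    then show ?thesis using False step_x by (simp add: jump_def B_def)
  qed
  text \<open>Non-maxima between x and y have smaller values than p y, hence smaller jumps.\<close>
  have jumps: "jump p m Q s \<le> B" if "x < s" "s \<le> y - 1" "\<not> lr_max p s" for s
  proof -
    have "p s < p y"
      using non_lr_max_increasing[OF p avoid, of s y] that xy by simp
    then have "jump p m Q s \<le> jump p m Q y"
      using Q0 that by (intro jump_mono) auto
    with jump_y show ?thesis by simp
  qed
  have "?s (y - 1) \<le> B + 2 ^ (m + 1 - x) - 2 ^ (m + 1 - (y - 1))"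
    using xy(4,5) s_x jumps by (intro sched_growth_bound) auto
  moreover have "(2::int) \<le> 2 ^ (m + 1 - (y - 1))"
    using xy(4,5) by (simp add: self_le_power)
  moreover have "?s y = max (?s (y - 1) + 1) (jump p m Q y)"
    using sched_not_lr_max[of p "y - 1" m Q] xy(2,4) by simp
  moreover have "(1::int) \<le> 2 ^ (m + 1 - x)" by simp
  ultimately show ?thesis using jump_y unfolding B_def by linarith
qed

section \<open>Affine permutations\<close>

lemma periodic_shift:
  assumes "\<And>z. w (z + int n) = w z + int n"
  shows "w (z + k * int n) = w z + k * int n"
proof (induction k rule: int_induct[where k = 0])
  case base
  then show ?case by simp
next
  case (step1 k)
  have "w (z + (k + 1) * int n) = w (z + k * int n + int n)" by (simp add: algebra_simps)
  also have "\<dots> = w (z + k * int n) + int n" using assms by simp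
  finally show ?case using step1 by (simp add: algebra_simps)
next
  case (step2 k)
  have "w (z + k * int n) = w (z + (k - 1) * int n + int n)" by (simp add: algebra_simps)
  also have "\<dots> = w (z + (k - 1) * int n) + int n" using assms by simp
  finally show ?case using step2 by (simp add: algebra_simps)
qed

lemma sum_first_ints: "(\<Sum>t = 1..int n. t) = int ((n + 1) choose 2)"
proof (induction n)
  case 0
  then show ?case by simp
next
  case (Suc n)
  have "{1..int (Suc n)} = insert (int n + 1) {1..int n}" by auto
  then have "(\<Sum>t = 1..int (Suc n). t) = (int n + 1) + (\<Sum>t = 1..int n. t)" by simp
  also have "\<dots> = int ((Suc n + 1) choose 2)" using Suc by (simp add: numeral_2_eq_2)
  finally show ?case .
qed

lemma affine_sym_props:
  assumes "w \<in> affine_sym n"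
  shows affine_sym_inj: "inj w"
    and affine_sym_shift: "w (z + k * int n) = w z + k * int n"
    and affine_sym_displacement_sum: "(\<Sum>t = 1..int n. w t - t) = 0"
proof -
  have w: "bij w" "\<And>i. w (i + int n) = w i + int n"
    "(\<Sum>i = 1..int n. w i) = int ((n + 1) choose 2)"
    using assms by (auto simp: affine_sym_def)
  show "inj w" using w(1) by (rule bij_is_inj)
  show "w (z + k * int n) = w z + k * int n" using w(2) by (rule periodic_shift)
  show "(\<Sum>t = 1..int n. w t - t) = 0"
    using w(3) sum_first_ints[of n] by (simp add: sum_subtractf)
qed

text \<open>An affine permutation is determined by its window, so only finitely many of them have
  all displacements in the window bounded by B.\<close>
lemma finite_bounded_displacement:
  assumes "1 \<le> n"
  shows "finite {w \<in> affine_sym n. \<forall>t\<in>{1..int n}. \<bar>w t - t\<bar> \<le> B}"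
proof -
  let ?S = "{w \<in> affine_sym n. \<forall>t\<in>{1..int n}. \<bar>w t - t\<bar> \<le> B}"
  let ?window = "\<lambda>w. restrict w {1..int n}"
  have "inj_on ?window ?S"
  proof (rule inj_onI)
    fix w w' assume ws: "w \<in> ?S" "w' \<in> ?S" and eq: "?window w = ?window w'"
    show "w = w'"
    proof
      fix z
      define r where "r = (z - 1) mod int n + 1"
      define k where "k = (z - 1) div int n"
      have z: "z = r + k * int n"
        unfolding r_def k_def by (metis add.commute diff_add_cancel div_mult_mod_eq add.assoc)
      have "r \<in> {1..int n}"
        using assms unfolding r_def by (simp add: pos_mod_bound add1_zle_eq)
      then have "w r = w' r" using fun_cong[OF eq, of r] by simp
      then show "w z = w' z"
        using ws affine_sym_shift[of w n r k] affine_sym_shift[of w' n r k] z by simp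
    qed
  qed
  moreover have "?window ` ?S \<subseteq> Pi\<^sub>E {1..int n} (\<lambda>_. {1 - B..int n + B})"
    by (auto simp: abs_le_iff)
  moreover have "finite (Pi\<^sub>E {1..int n} (\<lambda>_. {1 - B..int n + B}))"
    by (rule finite_PiE) auto
  ultimately show ?thesis
    using finite_imageD finite_subset by blast
qed

text \<open>Since the displacements sum to zero, a large displacement at t0 forces two window
  positions whose values are far apart.\<close>
lemma displacement_spread:
  assumes w: "w \<in> affine_sym n" and t0: "t0 \<in> {1..int n}"
  obtains i j where "i \<in> {1..int n}" "j \<in> {1..int n}" "\<bar>w t0 - t0\<bar> < w i - w j + int n"
proof -
  have sum0: "(\<Sum>t = 1..int n. w t - t) = 0"
    using w by (rule affine_sym_displacement_sum)
  have ne: "{1..int n} \<noteq> {}" using t0 by auto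
  obtain i where i: "i \<in> {1..int n}" "0 \<le> w i - i"
  proof (rule ccontr)
    assume "\<not> thesis"
    with that have "\<forall>t\<in>{1..int n}. w t - t < 0" by force
    then have "(\<Sum>t = 1..int n. w t - t) < (\<Sum>t = 1..int n. 0)"
      using ne by (intro sum_strict_mono) auto
    with sum0 show False by simp
  qed
  obtain j where j: "j \<in> {1..int n}" "w j - j \<le> 0"
  proof (rule ccontr)
    assume "\<not> thesis"
    with that have "\<forall>t\<in>{1..int n}. 0 < w t - t" by force
    then have "0 < (\<Sum>t = 1..int n. w t - t)"
      using ne by (intro sum_pos) auto
    with sum0 show False by simp
  qed
  show ?thesis
  proof (cases "0 \<le> w t0 - t0")
    case True
    then show ?thesis using that[of t0 j] t0 j by auto
  next
    case False
    then show ?thesis using that[of i t0] t0 i by auto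
  qed
qed

section \<open>Embedding the pattern into two arithmetic progressions\<close>

lemma order_iff_from_order:
  fixes p :: "'a \<Rightarrow> 'b::linorder" and v :: "'a \<Rightarrow> 'c::linorder"
  assumes "inj_on p A" and preserve: "\<And>a b. a \<in> A \<Longrightarrow> b \<in> A \<Longrightarrow> p a < p b \<Longrightarrow> v a < v b"
    and "a \<in> A" "b \<in> A"
  shows "v a < v b \<longleftrightarrow> p a < p b"
proof
  assume v: "v a < v b"
  show "p a < p b"
  proof (rule ccontr)
    assume "\<not> p a < p b"
    then consider "p b < p a" | "p a = p b" by fastforce
    then show False
    proof cases
      case 1
      then show False using preserve[of b a] assms(3,4) v by simp
    next
      case 2
      then have "a = b" using assms(1,3,4) by (simp add: inj_on_eq_iff)
      then show False using v by simp
    qed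
  qed
qed (use assms in blast)

lemma lr_max_before_larger:
  assumes "lr_max p a" "b \<in> {1..m}" "p a < p b"
  shows "a < b"
  using assms lr_max_greater[of p a b] by (cases "b < a") (auto simp: not_less_iff_gr_or_eq)

text \<open>The
  order of p is preserved weakly (strictness comes later from injectivity).\<close>
lemma sched_height_order:
  fixes N D :: int
  assumes p: "p permutes {1..m}" and avoid: "\<not> perm_contains p m pat321 3"
    and N: "0 < N" and D: "Q * N < D" "D \<le> (Q + 1) * N" and Q: "2 ^ m \<le> Q"
    and ab: "a \<in> {1..m}" "b \<in> {1..m}" "p a < p b"
  shows "(if lr_max p a then D else 0) + sched p m Q a * N
         \<le> (if lr_max p b then D else 0) + sched p m Q b * N"
proof -
  let ?s = "sched p m Q"
  have "0 < Q" using Q zero_less_power[of "2::int" m] by linarith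
  then have "0 < Q * N" using N by simp
  then have D0: "0 \<le> D" using D(1) by simp
  have mono: "?s a * N \<le> ?s b * N" if "a \<le> b"
    using that N by (intro mult_right_mono sched_le) auto
  show ?thesis
  proof (cases "lr_max p a")
    case a: True
    then have "a < b" using ab by (intro lr_max_before_larger[of p a b m])
    show ?thesis
    proof (cases "lr_max p b")
      case True
      then show ?thesis using a mono \<open>a < b\<close> by simp
    next
      case b: False
      have "?s a + Q + 1 \<le> ?s b"
        using sched_gap_above[of p a b] a b ab \<open>a < b\<close> by simp
      then have "(Q + 1) * N \<le> (?s b - ?s a) * N"
        using N by (intro mult_right_mono) auto
      then show ?thesis using a b D(2) by (simp add: algebra_simps)
    qed
  next
    case a: False
    show ?thesis
    proof (cases "lr_max p b")
      case b: True
      show ?thesis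
      proof (cases "a < b")
        case True
        then show ?thesis using a b mono D0 by simp
      next
        case False
        then have "b < a" using ab by (cases "a = b") auto
        then have "?s a \<le> ?s b + Q"
          using sched_gap_below[OF p avoid b a] ab Q by simp
        then have "?s a * N \<le> (?s b + Q) * N"
          using N by (intro mult_right_mono) auto
        then show ?thesis using a b D(1) by (simp add: algebra_simps)
      qed
    next
      case b: False
      have "a < b"
      proof (rule ccontr)
        assume "\<not> a < b"
        then have "b < a" using ab by (cases "a = b") auto
        then have "p b < p a" using non_lr_max_increasing[OF p avoid, of b a] b ab by simp
        with ab show False by simp
      qed
      then show ?thesis using a b mono by simp
    qed
  qed
qed

lemma contains_from_spread:
  assumes p: "p permutes {1..m}" and avoid: "\<not> perm_contains p m pat321 3"
    and n: "1 \<le> n" and ij: "i \<in> {1..int n}" "j \<in> {1..int n}"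
    and inj: "inj w" and shift: "\<And>z k. w (z + k * int n) = w z + k * int n"
    and spread: "2 ^ m * int n < w i - w j"
  shows "contains_pattern w p m"
proof -
  define D where "D = w i - w j"
  define Q where "Q = (D - 1) div int n"
  have N: "0 < int n" using n by simp
  have D_div: "D - 1 = Q * int n + (D - 1) mod int n"
    unfolding Q_def by simp
  have D: "Q * int n < D" "D \<le> (Q + 1) * int n"
    using D_div pos_mod_sign[OF N, of "D - 1"] pos_mod_bound[OF N, of "D - 1"]
    by (simp_all add: algebra_simps)
  have "(2 ^ m * int n) div int n \<le> (D - 1) div int n"
    using spread N unfolding D_def by (intro zdiv_mono1) auto
  then have Q: "2 ^ m \<le> Q" using N unfolding Q_def by simp
  let ?s = "sched p m Q"
  define pos where "pos a = (if lr_max p a then i else j) + ?s a * int n" for a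
  define height where "height a = (if lr_max p a then D else 0) + ?s a * int n" for a
  have w_pos: "w (pos a) = w j + height a" for a
    unfolding pos_def height_def D_def by (simp add: shift)
  have pos_mono: "pos a < pos b" if "a < b" for a b
  proof -
    have "(?s a + 1) * int n \<le> ?s b * int n"
      using sched_less[OF that, of p m Q] N by (intro mult_right_mono) auto
    then have "?s a * int n + int n \<le> ?s b * int n" by (simp add: distrib_right)
    moreover have "(if lr_max p a then i else j) < 1 + int n" "1 \<le> (if lr_max p b then i else j)"
      using ij by auto
    ultimately show ?thesis unfolding pos_def by linarith
  qed
  have preserve: "w (pos a) < w (pos b)" if "a \<in> {1..m}" "b \<in> {1..m}" "p a < p b" for a b
  proof -
    have "w (pos a) \<le> w (pos b)"
      unfolding w_pos height_def using sched_height_order[OF p avoid N D Q that] by simp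
    moreover have "pos a \<noteq> pos b"
      using pos_mono[of a b] pos_mono[of b a] that by (cases a b rule: linorder_cases) auto
    then have "w (pos a) \<noteq> w (pos b)" using inj by (simp add: inj_eq)
    ultimately show ?thesis by simp
  qed
  show ?thesis
    unfolding contains_pattern_def
  proof (intro exI[of _ pos] conjI ballI)
    show "strict_mono_on {1..m} pos"
      by (simp add: strict_mono_on_def pos_mono)
    show "w (pos a) < w (pos b) \<longleftrightarrow> p a < p b" if "a \<in> {1..m}" "b \<in> {1..m}" for a b
      using permutes_inj_on[OF p] preserve that by (rule order_iff_from_order)
  qed
qed

lemma large_displacement_contains:
  assumes p: "p permutes {1..m}" and avoid: "\<not> perm_contains p m pat321 3"
    and n: "1 \<le> n" and w: "w \<in> affine_sym n" and t0: "t0 \<in> {1..int n}"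
    and large: "2 ^ m * int n + int n < \<bar>w t0 - t0\<bar>"
  shows "contains_pattern w p m"
proof -
  obtain i j where ij: "i \<in> {1..int n}" "j \<in> {1..int n}" "\<bar>w t0 - t0\<bar> < w i - w j + int n"
    using displacement_spread[OF w t0] .
  have "2 ^ m * int n < w i - w j" using ij(3) large by simp
  with ij(1,2) show ?thesis
    using affine_sym_inj[OF w] affine_sym_shift[OF w]
    by (intro contains_from_spread[OF p avoid n]) auto
qed

theorem proposition3p3:
  fixes p :: "nat \<Rightarrow> nat" and m n :: nat
  assumes "p permutes {1..m}"
    and "\<not> perm_contains p m pat321 3"
    and "n \<ge> 2"
  shows "finite {w \<in> affine_sym n. avoids_pattern w p m}"
proof -
  have n: "1 \<le> n" using assms(3) by simp
  have "{w \<in> affine_sym n. avoids_pattern w p m}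
        \<subseteq> {w \<in> affine_sym n. \<forall>t\<in>{1..int n}. \<bar>w t - t\<bar> \<le> 2 ^ m * int n + int n}"
    using large_displacement_contains[OF assms(1,2) n]
    by (force simp: avoids_pattern_def not_le)
  then show ?thesis
    using finite_bounded_displacement[OF n] by (rule finite_subset)
qed

end
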